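(* Let $(A^1,B^1)$ be an $n_1\times m_1$ bimatrix game, $(A^2,B^2)$ an $n_2\times m_2$ bimatrix game, $K$ a real number with $K>|c|$ for every entry $c$ of $A^1,B^1,A^2,B^2$, and let $(A,B)$ be the sum game $(A^1,B^1)+(A^2,B^2)$ via $K$. If $(x,y)$ is a Nash equilibrium of $(A,B)$, then $0<\sum_{i=1}^{n_1}x_i<1$ and $0<\sum_{j=1}^{m_1}y_j<1$.
   Context: An $n\times m$ bimatrix game $(A,B)$ consists of two real $n\times m$ matrices. A mixed strategy of the row player is a probability vector $x\in\Delta_n=\{x\in\mathbb{R}^n_{\ge 0}:\sum_i x_i=1\}$, of the column player $y\in\Delta_m$; the expected payoffs are $x^TAy$ (row player) and $x^TBy$ (column player). $(x,y)$ is a Nash equilibrium if $x^TAy\ge \hat x^TAy$ for all $\hat x\in\Delta_n$ and $x^TBy\ge x^TB\hat y$ for all $\hat y\in\Delta_m$. The sum game $(A^1,B^1)+(A^2,B^2)$ via $K$ is the $(n_1+n_2)\times(m_1+m_2)$ game $(A,B)$ with $A_{ij}=A^1_{ij}$, $B_{ij}=B^1_{ij}$ if $i\le n_1,j\le m_1$; $A_{ij}=A^2_{i-n_1,j-m_1}$, $B_{ij}=B^2_{i-n_1,j-m_1}$ if $i>n_1,j>m_1$; and $A_{ij}=K$, $B_{ij}=-K$ otherwise. *)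

theory Defs
  imports "HOL-Analysis.Analysis"
begin

text \<open>Matrices are functions nat => nat => real, indices 0-based: an n x m matrix
uses entries M i j with i < n, j < m.\<close>

definition mixed_strats :: "nat \<Rightarrow> (nat \<Rightarrow> real) set" where
  "mixed_strats n = {x. (\<forall>i<n. 0 \<le> x i) \<and> (\<Sum>i<n. x i) = 1}"

definition payoff :: "nat \<Rightarrow> nat \<Rightarrow> (nat \<Rightarrow> nat \<Rightarrow> real) \<Rightarrow> (nat \<Rightarrow> real) \<Rightarrow> (nat \<Rightarrow> real) \<Rightarrow> real" where
  "payoff n m M x y = (\<Sum>i<n. \<Sum>j<m. x i * M i j * y j)"

definition nash_eq :: "nat \<Rightarrow> nat \<Rightarrow> (nat \<Rightarrow> nat \<Rightarrow> real) \<Rightarrow> (nat \<Rightarrow> nat \<Rightarrow> real)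
    \<Rightarrow> (nat \<Rightarrow> real) \<Rightarrow> (nat \<Rightarrow> real) \<Rightarrow> bool" where
  "nash_eq n m A B x y \<longleftrightarrow> x \<in> mixed_strats n \<and> y \<in> mixed_strats m \<and>
     (\<forall>x'\<in>mixed_strats n. payoff n m A x y \<ge> payoff n m A x' y) \<and>
     (\<forall>y'\<in>mixed_strats m. payoff n m B x y \<ge> payoff n m B x y')"

definition sum_game :: "nat \<Rightarrow> nat \<Rightarrow> (nat \<Rightarrow> nat \<Rightarrow> real) \<Rightarrow> (nat \<Rightarrow> nat \<Rightarrow> real) \<Rightarrow> real
    \<Rightarrow> (nat \<Rightarrow> nat \<Rightarrow> real)" where
  "sum_game n1 m1 M1 M2 c = (\<lambda>i j.
     if i < n1 \<and> j < m1 then M1 i j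
     else if n1 \<le> i \<and> m1 \<le> j then M2 (i - n1) (j - m1)
     else c)"

end

theory Submission
  imports Defs
begin

text \<open>At an equilibrium every pure strategy played with positive probability is a best reply.
  The off-diagonal blocks give the row player K, more than any entry of A1 or A2, and the column
  player -K, less than any entry of B1 or B2: the row player wants to mismatch the column player's
  block, the column player to match the row player's. So if the row player stays inside block 1, the
  column player does too, then the row player moves entirely to block 2, then so does the column
  player, and then the row player moves back to block 1. Starting this cycle at any extreme case
  leads to the opposite extreme, so neither player puts all or none of the weight on block 1.\<close>

definition row_payoff :: "nat \<Rightarrow> (nat \<Rightarrow> nat \<Rightarrow> real) \<Rightarrow> (nat \<Rightarrow> real) \<Rightarrow> nat \<Rightarrow> real" where
  "row_payoff m A y i = (\<Sum>j<m. y j * A i j)"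

definition col_payoff :: "nat \<Rightarrow> (nat \<Rightarrow> nat \<Rightarrow> real) \<Rightarrow> (nat \<Rightarrow> real) \<Rightarrow> nat \<Rightarrow> real" where
  "col_payoff n B x j = (\<Sum>i<n. x i * B i j)"

lemma weighted_sum_strict_mono:
  fixes z f g :: "'a \<Rightarrow> real"
  assumes "finite S" "\<And>k. k \<in> S \<Longrightarrow> 0 \<le> z k" "sum z S > 0" "\<And>k. k \<in> S \<Longrightarrow> f k < g k"
  shows "(\<Sum>k\<in>S. z k * f k) < (\<Sum>k\<in>S. z k * g k)"
proof (rule sum_strict_mono_ex1[OF assms(1)])
  show "\<forall>k\<in>S. z k * f k \<le> z k * g k"
    using assms(2,4) by (simp add: mult_left_mono less_imp_le)
  have "\<exists>k\<in>S. 0 < z k"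
  proof (rule ccontr)
    assume "\<not> (\<exists>k\<in>S. 0 < z k)"
    then have "sum z S \<le> 0" by (intro sum_nonpos) (simp add: not_less)
    with assms(3) show False by simp
  qed
  then show "\<exists>k\<in>S. z k * f k < z k * g k"
    using assms(4) by (auto intro: mult_strict_left_mono)
qed

lemma weighted_sum_eq_max_imp_zero:
  fixes z v :: "'a \<Rightarrow> real"
  assumes "finite S" "\<And>k. k \<in> S \<Longrightarrow> 0 \<le> z k" "sum z S = 1"
    and "\<And>k. k \<in> S \<Longrightarrow> v k \<le> c" "(\<Sum>k\<in>S. z k * v k) = c"
    and "k \<in> S" "v k < c"
  shows "z k = 0"
proof -
  have "(\<Sum>k\<in>S. z k * (c - v k)) = sum z S * c - (\<Sum>k\<in>S. z k * v k)"
    by (simp add: right_diff_distrib sum_subtractf sum_distrib_right)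
  also have "\<dots> = 0" using assms(3,5) by simp
  finally have "z k * (c - v k) = 0"
    using assms(1,2,4,6) by (subst (asm) sum_nonneg_eq_0_iff) auto
  with assms(7) show ?thesis by simp
qed

lemma mixed_strats_vanish_outside:
  assumes "y \<in> mixed_strats m" "J \<subseteq> {..<m}" "sum y J = 1" "j < m" "j \<notin> J"
  shows "y j = 0"
proof -
  have "sum y ({..<m} - J) = 0"
    using assms(1-3) by (simp add: sum_diff finite_subset mixed_strats_def)
  then show ?thesis
    using assms(1,4,5) by (subst (asm) sum_nonneg_eq_0_iff) (auto simp: mixed_strats_def)
qed

lemma mixed_strats_weighted_sum_restrict:
  assumes "y \<in> mixed_strats m" "J \<subseteq> {..<m}" "sum y J = 1"
  shows "(\<Sum>j<m. y j * f j) = (\<Sum>j\<in>J. y j * f j)"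
  using assms mixed_strats_vanish_outside[OF assms]
  by (intro sum.mono_neutral_right) auto

lemma mixed_strats_sum_nonneg: "x \<in> mixed_strats n \<Longrightarrow> I \<subseteq> {..<n} \<Longrightarrow> 0 \<le> sum x I"
  by (auto simp: mixed_strats_def intro!: sum_nonneg)

lemma mixed_strats_sum_upper_block:
  assumes "x \<in> mixed_strats (k + l)"
  shows "sum x {k..<k + l} = 1 - sum x {..<k}"
proof -
  have "sum x {..<k + l} = sum x {..<k} + sum x {k..<k + l}"
    by (simp add: lessThan_atLeast0 sum.atLeastLessThan_concat)
  with assms show ?thesis by (simp add: mixed_strats_def)
qed

lemma payoff_eq_row_payoff: "payoff n m A x y = (\<Sum>i<n. x i * row_payoff m A y i)"
  by (simp add: payoff_def row_payoff_def sum_distrib_left mult_ac)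

lemma payoff_eq_col_payoff: "payoff n m B x y = (\<Sum>j<m. y j * col_payoff n B x j)"
  unfolding payoff_def col_payoff_def
  by (subst sum.swap) (simp add: sum_distrib_left mult_ac)

lemma unit_vector_mixed_strats: "k < n \<Longrightarrow> (\<lambda>i. of_bool (i = k)) \<in> mixed_strats n"
  by (simp add: mixed_strats_def)

lemma nash_eq_row_payoff_le:
  assumes "nash_eq n m A B x y" "i < n"
  shows "row_payoff m A y i \<le> payoff n m A x y"
proof -
  have "payoff n m A (\<lambda>k. of_bool (k = i)) y \<le> payoff n m A x y"
    using assms unit_vector_mixed_strats by (auto simp: nash_eq_def)
  then show ?thesis
    using assms(2) by (simp add: payoff_eq_row_payoff)
qed

lemma nash_eq_col_payoff_le:
  assumes "nash_eq n m A B x y" "j < m"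
  shows "col_payoff n B x j \<le> payoff n m B x y"
proof -
  have "payoff n m B x (\<lambda>k. of_bool (k = j)) \<le> payoff n m B x y"
    using assms unit_vector_mixed_strats by (auto simp: nash_eq_def)
  then show ?thesis
    using assms(2) by (simp add: payoff_eq_col_payoff)
qed

lemma nash_eq_inferior_row_unplayed:
  assumes "nash_eq n m A B x y" "i < n" "i' < n" "row_payoff m A y i < row_payoff m A y i'"
  shows "x i = 0"
proof (rule weighted_sum_eq_max_imp_zero
    [where S = "{..<n}" and v = "row_payoff m A y" and c = "payoff n m A x y"])
  have strat: "x \<in> mixed_strats n" using assms(1) by (simp add: nash_eq_def)
  then show "0 \<le> x k" if "k \<in> {..<n}" for k
    using that by (simp add: mixed_strats_def)
  show "sum x {..<n} = 1" using strat by (simp add: mixed_strats_def)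
  show "row_payoff m A y k \<le> payoff n m A x y" if "k \<in> {..<n}" for k
    using that nash_eq_row_payoff_le[OF assms(1)] by simp
  show "(\<Sum>k\<in>{..<n}. x k * row_payoff m A y k) = payoff n m A x y"
    by (simp add: payoff_eq_row_payoff)
  show "row_payoff m A y i < payoff n m A x y"
    using assms(4) nash_eq_row_payoff_le[OF assms(1,3)] by linarith
qed (use assms(2) in simp_all)

lemma nash_eq_inferior_col_unplayed:
  assumes "nash_eq n m A B x y" "j < m" "j' < m" "col_payoff n B x j < col_payoff n B x j'"
  shows "y j = 0"
proof (rule weighted_sum_eq_max_imp_zero
    [where S = "{..<m}" and v = "col_payoff n B x" and c = "payoff n m B x y"])
  have strat: "y \<in> mixed_strats m" using assms(1) by (simp add: nash_eq_def)
  then show "0 \<le> y k" if "k \<in> {..<m}" for k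
    using that by (simp add: mixed_strats_def)
  show "sum y {..<m} = 1" using strat by (simp add: mixed_strats_def)
  show "col_payoff n B x k \<le> payoff n m B x y" if "k \<in> {..<m}" for k
    using that nash_eq_col_payoff_le[OF assms(1)] by simp
  show "(\<Sum>k\<in>{..<m}. y k * col_payoff n B x k) = payoff n m B x y"
    by (simp add: payoff_eq_col_payoff)
  show "col_payoff n B x j < payoff n m B x y"
    using assms(4) nash_eq_col_payoff_le[OF assms(1,3)] by linarith
qed (use assms(2) in simp_all)

lemma nash_eq_dominated_rows_unplayed:
  assumes "nash_eq n m A B x y" "J \<subseteq> {..<m}" "sum y J = 1" "i' < n" "I \<subseteq> {..<n}"
    and "\<And>i j. i \<in> I \<Longrightarrow> j \<in> J \<Longrightarrow> A i j < A i' j"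
  shows "sum x I = 0"
proof (intro sum.neutral ballI)
  fix i assume "i \<in> I"
  have y: "y \<in> mixed_strats m" using assms(1) by (simp add: nash_eq_def)
  have "(\<Sum>j\<in>J. y j * A i j) < (\<Sum>j\<in>J. y j * A i' j)"
  proof (rule weighted_sum_strict_mono)
    show "finite J" using assms(2) finite_subset by blast
    show "0 \<le> y j" if "j \<in> J" for j using y assms(2) that by (auto simp: mixed_strats_def)
  qed (use assms(3,6) \<open>i \<in> I\<close> in auto)
  then have "row_payoff m A y i < row_payoff m A y i'"
    by (simp add: row_payoff_def mixed_strats_weighted_sum_restrict[OF y assms(2,3)])
  then show "x i = 0"
    using assms(5) \<open>i \<in> I\<close> by (intro nash_eq_inferior_row_unplayed[OF assms(1) _ assms(4)]) auto
qed

lemma nash_eq_dominated_cols_unplayed: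
  assumes "nash_eq n m A B x y" "I \<subseteq> {..<n}" "sum x I = 1" "j' < m" "J \<subseteq> {..<m}"
    and "\<And>i j. i \<in> I \<Longrightarrow> j \<in> J \<Longrightarrow> B i j < B i j'"
  shows "sum y J = 0"
proof (intro sum.neutral ballI)
  fix j assume "j \<in> J"
  have x: "x \<in> mixed_strats n" using assms(1) by (simp add: nash_eq_def)
  have "(\<Sum>i\<in>I. x i * B i j) < (\<Sum>i\<in>I. x i * B i j')"
  proof (rule weighted_sum_strict_mono)
    show "finite I" using assms(2) finite_subset by blast
    show "0 \<le> x i" if "i \<in> I" for i using x assms(2) that by (auto simp: mixed_strats_def)
  qed (use assms(3,6) \<open>j \<in> J\<close> in auto)
  then have "col_payoff n B x j < col_payoff n B x j'"
    by (simp add: col_payoff_def mixed_strats_weighted_sum_restrict[OF x assms(2,3)])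
  then show "y j = 0"
    using assms(5) \<open>j \<in> J\<close> by (intro nash_eq_inferior_col_unplayed[OF assms(1) _ assms(4)]) auto
qed

locale sum_game_equilibrium =
  fixes n1 m1 n2 m2 :: nat
    and A1 B1 A2 B2 :: "nat \<Rightarrow> nat \<Rightarrow> real"
    and K :: real
    and x y :: "nat \<Rightarrow> real"
  assumes nonempty: "n1 \<ge> 1" "m1 \<ge> 1" "n2 \<ge> 1" "m2 \<ge> 1"
    and bounded1: "\<forall>i<n1. \<forall>j<m1. \<bar>A1 i j\<bar> < K \<and> \<bar>B1 i j\<bar> < K"
    and bounded2: "\<forall>i<n2. \<forall>j<m2. \<bar>A2 i j\<bar> < K \<and> \<bar>B2 i j\<bar> < K"
    and nash: "nash_eq (n1 + n2) (m1 + m2) (sum_game n1 m1 A1 A2 K) (sum_game n1 m1 B1 B2 (- K)) x y"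
begin

lemma entry_bounds1:
  assumes "i < n1" "j < m1"
  shows "A1 i j < K" "- K < B1 i j"
  using bounded1[rule_format, OF assms] by (simp_all add: abs_less_iff)

lemma entry_bounds2:
  assumes "i < n2" "j < m2"
  shows "A2 i j < K" "- K < B2 i j"
  using bounded2[rule_format, OF assms] by (simp_all add: abs_less_iff)

lemma row_upper_block: "sum x {n1..<n1 + n2} = 1 - sum x {..<n1}"
  using nash by (simp add: nash_eq_def mixed_strats_sum_upper_block)

lemma col_upper_block: "sum y {m1..<m1 + m2} = 1 - sum y {..<m1}"
  using nash by (simp add: nash_eq_def mixed_strats_sum_upper_block)

lemma row_block1_weight_bounds: "0 \<le> sum x {..<n1}" "sum x {..<n1} \<le> 1"
proof -
  have "x \<in> mixed_strats (n1 + n2)" using nash by (simp add: nash_eq_def)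
  then have "0 \<le> sum x {..<n1}" "0 \<le> sum x {n1..<n1 + n2}"
    by (rule mixed_strats_sum_nonneg; auto simp: subset_iff)+
  then show "0 \<le> sum x {..<n1}" "sum x {..<n1} \<le> 1" by (simp_all add: row_upper_block)
qed

lemma col_block1_weight_bounds: "0 \<le> sum y {..<m1}" "sum y {..<m1} \<le> 1"
proof -
  have "y \<in> mixed_strats (m1 + m2)" using nash by (simp add: nash_eq_def)
  then have "0 \<le> sum y {..<m1}" "0 \<le> sum y {m1..<m1 + m2}"
    by (rule mixed_strats_sum_nonneg; auto simp: subset_iff)+
  then show "0 \<le> sum y {..<m1}" "sum y {..<m1} \<le> 1" by (simp_all add: col_upper_block)
qed

lemma col_in_block1_if_row_in_block1:
  assumes "sum x {..<n1} = 1"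
  shows "sum y {..<m1} = 1"
proof -
  have "sum y {m1..<m1 + m2} = 0"
    using assms nonempty(2) entry_bounds1
    by (intro nash_eq_dominated_cols_unplayed[OF nash, where j' = 0]) (auto simp: sum_game_def)
  then show ?thesis by (simp add: col_upper_block)
qed

lemma row_in_block2_if_col_in_block1:
  assumes "sum y {..<m1} = 1"
  shows "sum x {..<n1} = 0"
  using assms nonempty(3) entry_bounds1
  by (intro nash_eq_dominated_rows_unplayed[OF nash, where i' = n1]) (auto simp: sum_game_def)

lemma col_in_block2_if_row_in_block2:
  assumes "sum x {..<n1} = 0"
  shows "sum y {..<m1} = 0"
proof -
  have "sum x {n1..<n1 + n2} = 1" using assms by (simp add: row_upper_block)
  with nonempty(4) entry_bounds2 show ?thesis
    by (intro nash_eq_dominated_cols_unplayed[OF nash, where j' = m1]) (auto simp: sum_game_def)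
qed

lemma row_in_block1_if_col_in_block2:
  assumes "sum y {..<m1} = 0"
  shows "sum x {..<n1} = 1"
proof -
  have "sum y {m1..<m1 + m2} = 1" using assms by (simp add: col_upper_block)
  with nonempty(1) entry_bounds2 have "sum x {n1..<n1 + n2} = 0"
    by (intro nash_eq_dominated_rows_unplayed[OF nash, where i' = 0]) (auto simp: sum_game_def)
  then show ?thesis by (simp add: row_upper_block)
qed

lemma block1_weights_strictly_between:
  "0 < sum x {..<n1} \<and> sum x {..<n1} < 1 \<and> 0 < sum y {..<m1} \<and> sum y {..<m1} < 1"
proof -
  have "sum x {..<n1} \<noteq> 1" "sum y {..<m1} \<noteq> 1" "sum x {..<n1} \<noteq> 0" "sum y {..<m1} \<noteq> 0"
    using col_in_block1_if_row_in_block1 row_in_block2_if_col_in_block1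
      col_in_block2_if_row_in_block2 row_in_block1_if_col_in_block2 by fastforce+
  with row_block1_weight_bounds col_block1_weight_bounds show ?thesis by linarith
qed

end

theorem lemma5:
  fixes n1 m1 n2 m2 :: nat
    and A1 B1 A2 B2 :: "nat \<Rightarrow> nat \<Rightarrow> real"
    and K :: real
    and x y :: "nat \<Rightarrow> real"
  assumes "n1 \<ge> 1" "m1 \<ge> 1" "n2 \<ge> 1" "m2 \<ge> 1"
    and "\<forall>i<n1. \<forall>j<m1. \<bar>A1 i j\<bar> < K \<and> \<bar>B1 i j\<bar> < K"
    and "\<forall>i<n2. \<forall>j<m2. \<bar>A2 i j\<bar> < K \<and> \<bar>B2 i j\<bar> < K"
    and "nash_eq (n1 + n2) (m1 + m2) (sum_game n1 m1 A1 A2 K) (sum_game n1 m1 B1 B2 (- K)) x y"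
  shows "0 < (\<Sum>i<n1. x i) \<and> (\<Sum>i<n1. x i) < 1 \<and> 0 < (\<Sum>j<m1. y j) \<and> (\<Sum>j<m1. y j) < 1"
proof -
  interpret sum_game_equilibrium n1 m1 n2 m2 A1 B1 A2 B2 K x y
    using assms by unfold_locales
  show ?thesis by (rule block1_weights_strictly_between)
qed

end
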